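(* Assume only upper-bound group constraints, i.e. $\mathcal S=\{r:\ |\{u\in C_k: r(u)\le i\}|\le u_i^k\ \forall i\in[n],k\in[t]\}\neq\emptyset$. Let $F$ be a maxmin-fair distribution over $\mathcal S$ for satisfaction $A=V$. Then $F$ is generalized Lorenz-dominant: for every probability distribution $D$ over $\mathcal S$ and every $m\in[n]$, $$\sum_{j=1}^m D_{(j)}\ \le\ \sum_{j=1}^m F_{(j)},$$ where $D_{(j)}$ denotes the $j$-th smallest value among $(D[u])_{u\in\mathcal U}$.
   Context: Ranking setting: $\mathcal U=\{u_1,\dots,u_n\}$ is a finite set of $n$ individuals, partitioned into groups $C_1,\dots,C_t$. $R:\mathcal U\to\mathbb R$ is a relevance function with pairwise distinct values. A ranking is a bijection $r:\mathcal U\to[n]$. The value function is $V(r,u)=f(r(u))-g(u)$, where $f:[n]\to\mathbb R$ is non-increasing and $g:\mathcal U\to\mathbb R$ satisfies $R(u)\ge R(v)\Rightarrow g(u)\ge g(v)$. The upper bounds $u_i^k$ are integers. Maxmin-fairness: for a finite nonempty set $\mathcal S$ of solutions, a finite set $\mathcal U$ and $A:\mathcal S\times\mathcal U\to\mathbb R$, for a probability distribution $D$ over $\mathcal S$ write $D[u]=\mathbb E_{S\sim D}[A(S,u)]$. A distribution $F$ over $\mathcal S$ is maxmin-fair if for every distribution $D$ over $\mathcal S$ and every $u\in\mathcal U$: if $D[u]>F[u]$ then there exists $v\in\mathcal U$ with $D[v]<F[v]\le F[u]$. *)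

theory Defs
  imports "HOL-Probability.Probability_Mass_Function"
begin

definition dist_val :: "('s \<Rightarrow> 'u \<Rightarrow> real) \<Rightarrow> 's pmf \<Rightarrow> 'u \<Rightarrow> real" where
  "dist_val A D u = measure_pmf.expectation D (\<lambda>s. A s u)"

definition maxmin_fair :: "'s set \<Rightarrow> 'u set \<Rightarrow> ('s \<Rightarrow> 'u \<Rightarrow> real) \<Rightarrow> 's pmf \<Rightarrow> bool" where
  "maxmin_fair SS UU A F \<longleftrightarrow> set_pmf F \<subseteq> SS \<and>
     (\<forall>D. set_pmf D \<subseteq> SS \<longrightarrow> (\<forall>u\<in>UU. dist_val A D u > dist_val A F u \<longrightarrow>
        (\<exists>v\<in>UU. dist_val A D v < dist_val A F v \<and> dist_val A F v \<le> dist_val A F u)))"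

(* the values (x u)_{u in UU} sorted increasingly (with multiplicity); entry j-1 is x_(j) *)
definition sorted_vals :: "'u set \<Rightarrow> ('u \<Rightarrow> real) \<Rightarrow> real list" where
  "sorted_vals UU x = sorted_list_of_multiset (image_mset x (mset_set UU))"

definition lorenz_sum :: "'u set \<Rightarrow> ('u \<Rightarrow> real) \<Rightarrow> nat \<Rightarrow> real" where
  "lorenz_sum UU x m = sum_list (take m (sorted_vals UU x))"

definition rankings :: "('a::finite \<Rightarrow> nat) set" where
  "rankings = {r. bij_betw r UNIV {1..CARD('a)}}"

definition feasible_rankings :: "nat \<Rightarrow> (nat \<Rightarrow> 'a::finite set) \<Rightarrow> (nat \<Rightarrow> nat \<Rightarrow> int) \<Rightarrow> ('a \<Rightarrow> nat) set" where
  "feasible_rankings t C ub = {r \<in> rankings.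
     \<forall>i\<in>{1..CARD('a)}. \<forall>k\<in>{1..t}. int (card {u \<in> C k. r u \<le> i}) \<le> ub i k}"

end

(* Both Lorenz sums are minima over m-element sets, so it suffices that every worst-off set T
   (closed downwards under the values F[u]) satisfies sum_T D[u] <= sum_T F[u]. This holds because
   every ranking in the support of F maximizes the sum over T of f(r u) among feasible rankings.
   Otherwise summation by parts yields a position i before which some feasible ranking places more
   members of T; an exchange argument on group sequences followed by a greedy assignment then gives
   a feasible ranking moving some member of T up and no member of T down. Substituting it in F
   improves that member, and every individual it hurts is outside T, hence better off under F,
   contradicting maxmin-fairness. *)

theory Submission
  imports Defs
begin

section \<open>Lorenz sums\<close>

definition worst_off_set :: "'u set \<Rightarrow> ('u \<Rightarrow> real) \<Rightarrow> 'u set \<Rightarrow> bool" where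
  "worst_off_set U x T \<longleftrightarrow> T \<subseteq> U \<and> (\<forall>u\<in>T. \<forall>w\<in>U. x w \<le> x u \<longrightarrow> w \<in> T)"

lemma sum_take_sorted_le_sum_mset:
  fixes xs :: "'a::linordered_ab_group_add list"
  assumes "sorted xs" "N \<subseteq># mset xs" "size N = m"
  shows "sum_list (take m xs) \<le> sum_mset N"
  using assms
proof (induction xs arbitrary: N m)
  case Nil
  then show ?case by simp
next
  case (Cons a ys)
  show ?case
  proof (cases m)
    case 0
    then show ?thesis using Cons.prems(3) by simp
  next
    case (Suc m')
    have "N \<noteq> {#}" using Cons.prems(3) Suc by auto
    then obtain b where b: "b \<in># N" "a \<notin># N \<Longrightarrow> b \<noteq> a" "a \<in># N \<Longrightarrow> b = a" by blast
    have "N - {#b#} \<subseteq># mset ys"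
    proof (rule mset_subset_eqI)
      fix c
      have "count N c \<le> count (mset ys) c + (if c = a then 1 else 0)"
        using mset_subset_eq_count[OF Cons.prems(2), of c] by (auto split: if_splits)
      then show "count (N - {#b#}) c \<le> count (mset ys) c"
        using b by (cases "a \<in># N"; cases "c = a"; cases "c = b") (auto simp: not_in_iff)
    qed
    moreover have "size (N - {#b#}) = m'" using Cons.prems(3) b Suc by (simp add: size_Diff_singleton)
    moreover have "a \<le> b" using Cons.prems(1,2) b by (cases "b = a") (auto dest: mset_subset_eqD)
    ultimately have "a + sum_list (take m' ys) \<le> b + sum_mset (N - {#b#})"
      using Cons.IH Cons.prems(1) by (intro add_mono) auto
    then show ?thesis using b(1) Suc by (simp add: sum_mset.remove)
  qed
qed

lemma subset_image_mset_mset_setE: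
  assumes "finite A" "N \<subseteq># image_mset x (mset_set A)"
  obtains S where "S \<subseteq> A" "image_mset x (mset_set S) = N"
proof -
  obtain K where "image_mset x (mset_set A) = N + K" using assms(2) by (metis subset_mset.le_iff_add)
  then obtain B C where B: "mset_set A = B + C" "N = image_mset x B" by (metis image_mset_eq_plusD)
  have sub: "B \<subseteq># mset_set A" using B by simp
  have "B = mset_set (set_mset B)"
  proof (rule multiset_eqI)
    fix a show "count B a = count (mset_set (set_mset B)) a"
      using mset_subset_eq_count[OF sub, of a] assms(1)
      by (cases "a \<in># B")
        (auto simp: count_mset_set' not_in_iff le_Suc_eq simp flip: count_greater_zero_iff split: if_splits)
  qed
  moreover have "set_mset B \<subseteq> A" using sub assms(1) by (metis finite_set_mset_mset_set set_mset_mono)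
  ultimately show ?thesis using that B(2) by metis
qed

lemma lorenz_sum_le_sum:
  assumes "finite U" "S \<subseteq> U" "card S = m"
  shows "lorenz_sum U x m \<le> sum x S"
proof -
  have "image_mset x (mset_set S) \<subseteq># mset (sorted_vals U x)"
    using assms unfolding sorted_vals_def
    by (simp add: image_mset_subseteq_mono subset_imp_msubset_mset_set mset_sorted_list_of_multiset)
  then have "sum_list (take m (sorted_vals U x)) \<le> sum_mset (image_mset x (mset_set S))"
    using assms(3) unfolding sorted_vals_def by (intro sum_take_sorted_le_sum_mset) auto
  then show ?thesis unfolding lorenz_sum_def by (simp add: sum_unfold_sum_mset)
qed

lemma lorenz_sum_attained:
  assumes "finite U" "m \<le> card U"
  obtains S where "S \<subseteq> U" "card S = m" "lorenz_sum U x m = sum x S"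
proof -
  define xs where "xs = sorted_vals U x"
  have mset_xs: "mset xs = image_mset x (mset_set U)" unfolding xs_def sorted_vals_def by simp
  have "mset (take m xs) \<subseteq># mset xs"
    by (metis append_take_drop_id mset_append mset_subset_eq_add_left)
  then obtain S where S: "S \<subseteq> U" "image_mset x (mset_set S) = mset (take m xs)"
    using subset_image_mset_mset_setE[OF assms(1)] mset_xs by metis
  have "length xs = card U" using mset_xs by (metis size_image_mset size_mset size_mset_set)
  then have "card S = m" using S(2) assms(2) by (metis length_take min.absorb2 size_image_mset size_mset size_mset_set)
  moreover have "lorenz_sum U x m = sum x S"
    unfolding lorenz_sum_def xs_def[symmetric] by (metis S(2) sum_mset_sum_list sum_unfold_sum_mset)
  ultimately show ?thesis using that S(1) by blast
qed

lemma sum_ge_sum_below_level: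
  fixes x :: "'u \<Rightarrow> real"
  assumes "finite U" "S \<subseteq> U" and below: "card {u\<in>U. x u < v} \<le> card S"
  shows "sum x {u\<in>U. x u < v} + real (card S - card {u\<in>U. x u < v}) * v \<le> sum x S"
proof -
  define L where "L = {u\<in>U. x u < v}"
  have fin: "finite S" "finite L" using assms(1,2) finite_subset unfolding L_def by auto
  have "sum (\<lambda>_. v) (S - L) \<le> sum x (S - L)"
    by (intro sum_mono) (use assms(2) in \<open>auto simp: L_def\<close>)
  moreover have "sum x (L - S) \<le> sum (\<lambda>_. v) (L - S)"
    by (intro sum_mono) (auto simp: L_def)
  moreover have "card (S - L) = card S - card (S \<inter> L)" "card (L - S) = card L - card (S \<inter> L)"
    using fin by (auto simp: card_Diff_subset_Int Int_commute)
  moreover have "card (S \<inter> L) \<le> card L" using fin by (intro card_mono) auto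
  moreover have "sum x S = sum x (S \<inter> L) + sum x (S - L)" "sum x L = sum x (S \<inter> L) + sum x (L - S)"
    using fin sum.Int_Diff[of S x L] sum.Int_Diff[of L x S] by (auto simp: Int_commute)
  ultimately show ?thesis using below unfolding L_def[symmetric] by (simp add: algebra_simps of_nat_diff)
qed

lemma exists_subset_sum_le_average:
  fixes h :: "'a \<Rightarrow> real"
  assumes "finite A" "k \<le> card A"
  obtains W where "W \<subseteq> A" "card W = k" "real (card A) * sum h W \<le> real k * sum h A"
proof -
  have "\<exists>W\<subseteq>A. card W = k \<and> real (card A) * sum h W \<le> real k * sum h A"
    using assms
  proof (induction A arbitrary: k rule: finite_ranking_induct[where f = h])
    case empty
    then show ?case by simp
  next
    case (insert a S)
    show ?case
    proof (cases "a \<in> S \<or> k = card (insert a S)")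
      case True
      then show ?thesis using insert by (auto simp: insert_absorb)
    next
      case False
      then have aS: "a \<notin> S" and k: "k \<le> card S" using insert.prems insert.hyps(1) by auto
      then obtain W where W: "W \<subseteq> S" "card W = k" "real (card S) * sum h W \<le> real k * sum h S"
        using insert.IH by blast
      have "sum h W \<le> real k * h a"
        using sum_mono[of W h "\<lambda>_. h a"] W(1,2) insert.hyps(2) by auto
      then have "real (card (insert a S)) * sum h W \<le> real k * sum h (insert a S)"
        using W(3) aS insert.hyps(1) by (simp add: algebra_simps)
      then show ?thesis using W(1,2) by blast
    qed
  qed
  then show ?thesis using that by blast
qed

lemma exists_level:
  fixes x :: "'u \<Rightarrow> real"
  assumes "finite U" "1 \<le> m" "m \<le> card U"
  obtains v where "card {u\<in>U. x u < v} < m" "m \<le> card {u\<in>U. x u \<le> v}"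
proof -
  define V where "V = {c \<in> x ` U. m \<le> card {u\<in>U. x u \<le> c}}"
  have "U \<noteq> {}" using assms by auto
  moreover have "{u\<in>U. x u \<le> Max (x ` U)} = U" using assms(1) by auto
  ultimately have "Max (x ` U) \<in> V"
    using assms(1,3) unfolding V_def by simp
  then have V: "finite V" "V \<noteq> {}" using assms(1) unfolding V_def by auto
  define v where "v = Min V"
  have "v \<in> V" using Min_in[OF V] unfolding v_def .
  then have le: "m \<le> card {u\<in>U. x u \<le> v}" unfolding V_def by simp
  have "card {u\<in>U. x u < v} < m"
  proof (rule ccontr)
    define P where "P = {u\<in>U. x u < v}"
    assume "\<not> card {u\<in>U. x u < v} < m"
    then have card_P: "m \<le> card P" unfolding P_def by simp
    then have "P \<noteq> {}" using assms(2) by auto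
    then have P: "finite (x ` P)" "x ` P \<noteq> {}" using assms(1) unfolding P_def by auto
    define c where "c = Max (x ` P)"
    have "c \<in> x ` P" using Max_in[OF P] unfolding c_def .
    then have "c < v" "c \<in> x ` U" unfolding P_def by auto
    moreover have "{u\<in>U. x u \<le> c} = P"
      using \<open>c < v\<close> Max_ge[OF P(1)] unfolding P_def c_def by fastforce
    ultimately have "c \<in> V" using card_P unfolding V_def by simp
    then show False using Min_le[OF V(1)] \<open>c < v\<close> unfolding v_def by fastforce
  qed
  then show ?thesis using that le by blast
qed

lemma lorenz_sum_le_if_worst_off_sums_le:
  fixes x d :: "'u \<Rightarrow> real"
  assumes U: "finite U" and m: "1 \<le> m" "m \<le> card U"
    and worst_off_le: "\<And>T. worst_off_set U x T \<Longrightarrow> sum d T \<le> sum x T"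
  shows "lorenz_sum U d m \<le> lorenz_sum U x m"
proof -
  \<comment> \<open>With v the m-th smallest value of x, the m smallest values of x sum to sum x L + (m - l) v,
    while an averaging choice of m - l elements of T - L bounds the m smallest values of d by a
    convex combination of sum d L and sum d T.\<close>
  obtain v where v: "card {u\<in>U. x u < v} < m" "m \<le> card {u\<in>U. x u \<le> v}"
    using exists_level[OF U m] .
  define L where "L = {u\<in>U. x u < v}"
  define T where "T = {u\<in>U. x u \<le> v}"
  define l where "l = card L"
  define M where "M = card T"
  have fin: "finite L" "finite T" and "L \<subseteq> T" using U unfolding L_def T_def by auto
  have lm: "l < m" "m \<le> M" using v unfolding l_def M_def L_def T_def by auto
  have card_T_L: "card (T - L) = M - l"
    using \<open>L \<subseteq> T\<close> fin unfolding M_def l_def by (simp add: card_Diff_subset)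
  have "m - l \<le> card (T - L)" using card_T_L lm by simp
  then obtain W where W: "W \<subseteq> T - L" "card W = m - l"
    "real (card (T - L)) * sum d W \<le> real (m - l) * sum d (T - L)"
    using exists_subset_sum_le_average[of "T - L" "m - l" d] fin by blast
  have "finite W" "W \<inter> L = {}" using W(1) fin by (auto intro: finite_subset)
  then have "card (L \<union> W) = m" "sum d (L \<union> W) = sum d L + sum d W"
    using W(2) fin lm unfolding l_def by (auto simp: card_Un_disjoint sum.union_disjoint Int_commute)
  moreover have "L \<union> W \<subseteq> U" using W(1) unfolding T_def L_def by auto
  ultimately have d_bound: "lorenz_sum U d m \<le> sum d L + sum d W"
    using lorenz_sum_le_sum[OF U] by metis
  obtain S where S: "S \<subseteq> U" "card S = m" "lorenz_sum U x m = sum x S"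
    using lorenz_sum_attained[OF U m(2)] .
  have x_bound: "sum x L + real (m - l) * v \<le> lorenz_sum U x m"
    using sum_ge_sum_below_level[OF U S(1)] S(2,3) lm unfolding L_def l_def by simp
  have "sum x (T - L) = sum (\<lambda>_. v) (T - L)" by (rule sum.cong) (auto simp: L_def T_def)
  then have "sum x (T - L) = real (M - l) * v" using card_T_L by simp
  then have sum_x_T: "sum x T = sum x L + real (M - l) * v"
    using sum.subset_diff[OF \<open>L \<subseteq> T\<close> fin(2), of x] by simp
  have sum_d_T: "sum d T = sum d L + sum d (T - L)"
    using sum.subset_diff[OF \<open>L \<subseteq> T\<close> fin(2), of d] by simp
  have "worst_off_set U x L" "worst_off_set U x T"
    unfolding worst_off_set_def L_def T_def by auto
  then have "sum d L \<le> sum x L" "sum d T \<le> sum x T" using worst_off_le by auto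
  then have "real (M - m) * sum d L + real (m - l) * sum d T
      \<le> real (M - m) * sum x L + real (m - l) * sum x T"
    by (intro add_mono mult_left_mono) auto
  moreover have "real (M - l) = real (M - m) + real (m - l)" using lm by simp
  ultimately have "real (M - l) * (sum d L + sum d W) \<le> real (M - l) * (sum x L + real (m - l) * v)"
    using W(3) sum_d_T sum_x_T card_T_L by (simp add: algebra_simps)
  then have "sum d L + sum d W \<le> sum x L + real (m - l) * v"
    using lm by (simp add: mult_le_cancel_left_pos)
  then show ?thesis using d_bound x_bound by linarith
qed

section \<open>Summation by parts\<close>

lemma telescope_from:
  fixes f :: "nat \<Rightarrow> real"
  assumes "p \<in> {1..N}"
  shows "f p = f N + (\<Sum>i=1..N-1. if p \<le> i then f i - f (Suc i) else 0)"
proof -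
  have "(\<Sum>i=1..N-1. if p \<le> i then f i - f (Suc i) else 0) = (\<Sum>i\<in>{i\<in>{1..N-1}. p \<le> i}. f i - f (Suc i))"
    by (rule sum.inter_filter[symmetric]) simp
  also have "{i\<in>{1..N-1}. p \<le> i} = {p..N-1}" using assms by auto
  also have "(\<Sum>i=p..N-1. f i - f (Suc i)) = f p - f (Suc (N - 1))"
    using assms sum_Suc_diff[of p "N - 1" f] by (simp add: sum_subtractf)
  finally show ?thesis using assms by simp
qed

lemma sum_comp_eq_prefix_counts:
  fixes f :: "nat \<Rightarrow> real"
  assumes "finite T" "\<forall>u\<in>T. r u \<in> {1..N}"
  shows "(\<Sum>u\<in>T. f (r u))
    = real (card T) * f N + (\<Sum>i=1..N-1. (f i - f (Suc i)) * real (card {u\<in>T. r u \<le> i}))"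
proof -
  have "(\<Sum>u\<in>T. f (r u)) = (\<Sum>u\<in>T. f N + (\<Sum>i=1..N-1. if r u \<le> i then f i - f (Suc i) else 0))"
    using assms(2) by (intro sum.cong refl telescope_from) auto
  also have "\<dots> = real (card T) * f N + (\<Sum>i=1..N-1. \<Sum>u\<in>T. if r u \<le> i then f i - f (Suc i) else 0)"
    by (simp add: sum.distrib sum.swap[of _ T])
  also have "(\<Sum>i=1..N-1. \<Sum>u\<in>T. if r u \<le> i then f i - f (Suc i) else 0)
      = (\<Sum>i=1..N-1. (f i - f (Suc i)) * real (card {u\<in>T. r u \<le> i}))"
    using assms(1) by (simp add: sum.inter_filter[symmetric] mult.commute)
  finally show ?thesis .
qed

lemma exists_prefix_count_gap:
  fixes f :: "nat \<Rightarrow> real" and s r :: "'a \<Rightarrow> nat"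
  assumes "finite T" "\<forall>u\<in>T. s u \<in> {1..n}" "\<forall>u\<in>T. r u \<in> {1..n}"
    and f: "antimono_on {1..n} f"
    and less: "(\<Sum>u\<in>T. f (s u)) < (\<Sum>u\<in>T. f (r u))"
  obtains i where "i \<in> {1..<n}" "f (Suc i) < f i" "card {u\<in>T. s u \<le> i} < card {u\<in>T. r u \<le> i}"
proof -
  have "\<exists>i\<in>{1..<n}. f (Suc i) < f i \<and> card {u\<in>T. s u \<le> i} < card {u\<in>T. r u \<le> i}"
  proof (rule ccontr)
    assume no_gap: "\<not> ?thesis"
    have "(f i - f (Suc i)) * real (card {u\<in>T. r u \<le> i}) \<le> (f i - f (Suc i)) * real (card {u\<in>T. s u \<le> i})"
      if i: "i \<in> {1..n-1}" for i
    proof -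
      have "f (Suc i) \<le> f i" using monotone_onD[OF f] i by auto
      then show ?thesis using no_gap i by (cases "f (Suc i) < f i") (auto intro: mult_left_mono)
    qed
    then have "(\<Sum>i=1..n-1. (f i - f (Suc i)) * real (card {u\<in>T. r u \<le> i}))
        \<le> (\<Sum>i=1..n-1. (f i - f (Suc i)) * real (card {u\<in>T. s u \<le> i}))"
      by (intro sum_mono) auto
    then have "(\<Sum>u\<in>T. f (r u)) \<le> (\<Sum>u\<in>T. f (s u))"
      using sum_comp_eq_prefix_counts[OF assms(1,2), of f] sum_comp_eq_prefix_counts[OF assms(1,3), of f]
      by simp
    then show False using less by simp
  qed
  then show ?thesis using that by blast
qed

section \<open>Group labellings\<close>

definition label_count :: "(nat \<Rightarrow> nat) \<Rightarrow> nat \<Rightarrow> nat \<Rightarrow> nat" where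
  "label_count L k y = card {x\<in>{1..y}. L x = k}"

lemma label_count_eq_sum: "label_count L k y = (\<Sum>x=1..y. if L x = k then 1 else 0)"
  unfolding label_count_def using sum.inter_filter[of "{1..y}" "\<lambda>_. 1::nat" "\<lambda>x. L x = k"] by simp

lemma label_count_0 [simp]: "label_count L k 0 = 0"
  by (simp add: label_count_def)

lemma label_count_Suc: "label_count L k (Suc y) = label_count L k y + (if L (Suc y) = k then 1 else 0)"
  by (simp add: label_count_eq_sum)

lemma label_count_mono: "y \<le> y' \<Longrightarrow> label_count L k y \<le> label_count L k y'"
  unfolding label_count_def by (intro card_mono) auto

lemma label_count_const:
  "a \<le> b \<Longrightarrow> \<forall>x\<in>{a<..b}. L x \<noteq> k \<Longrightarrow> label_count L k b = label_count L k a"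
  unfolding label_count_def by (rule arg_cong[where f = card]) auto

lemma label_count_upd_less: "y < z \<Longrightarrow> label_count (L(z := a)) k y = label_count L k y"
  unfolding label_count_def by (rule arg_cong[where f = card]) auto

lemma label_count_upd_ge:
  assumes "1 \<le> z" "z \<le> y"
  shows "label_count (L(z := a)) k y + (if L z = k then 1 else 0) = label_count L k y + (if a = k then 1 else 0)"
proof -
  have "z \<in> {1..y}" using assms by auto
  then have split: "label_count M k y = (if M z = k then 1 else 0) + (\<Sum>x\<in>{1..y}-{z}. if M x = k then 1 else 0)"
    for M by (simp add: label_count_eq_sum sum.remove)
  have "(\<Sum>x\<in>{1..y}-{z}. if (L(z := a)) x = k then 1 else 0) = (\<Sum>x\<in>{1..y}-{z}. if L x = k then 1 else 0)"
    by (rule sum.cong) auto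
  then show ?thesis using split[of "L(z := a)"] split[of L] by simp
qed

lemma label_count_swap:
  assumes "1 \<le> z" "z < p" "L p = k" "L z = l"
  shows "label_count (L(z := k, p := l)) k' y + (if z \<le> y \<and> y < p \<and> k' = l then 1 else 0)
       = label_count L k' y + (if z \<le> y \<and> y < p \<and> k' = k then 1 else 0)"
proof -
  have at_z: "label_count (L(z := k)) k' y + (if l = k' then 1 else 0) = label_count L k' y + (if k = k' then 1 else 0)"
    if "z \<le> y" using label_count_upd_ge[of z y L k k'] that assms by simp
  consider "y < z" | "z \<le> y" "y < p" | "p \<le> y" by linarith
  then show ?thesis
  proof cases
    case 1
    then show ?thesis using assms by (simp add: label_count_upd_less)
  next
    case 2
    then show ?thesis using at_z assms by (auto simp: label_count_upd_less)
  next
    case 3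
    have "label_count (L(z := k, p := l)) k' y + (if k = k' then 1 else 0)
        = label_count (L(z := k)) k' y + (if l = k' then 1 else 0)"
      using label_count_upd_ge[of p y "L(z := k)" l k'] 3 assms by simp
    then show ?thesis using at_z 3 assms by (auto split: if_splits)
  qed
qed

text \<open>A labelling L lists the group of the individual at each position. If tau k is the number
  of members of a set T in group k, then capped_count t tau L y is the largest number of members of T
  that a ranking with group sequence L can place among the first y positions.\<close>

definition capped_count :: "nat \<Rightarrow> (nat \<Rightarrow> nat) \<Rightarrow> (nat \<Rightarrow> nat) \<Rightarrow> nat \<Rightarrow> nat" where
  "capped_count t tau L y = (\<Sum>k=1..t. min (label_count L k y) (tau k))"

definition feasible_labelling ::
    "nat \<Rightarrow> nat \<Rightarrow> (nat \<Rightarrow> nat \<Rightarrow> int) \<Rightarrow> (nat \<Rightarrow> nat) \<Rightarrow> (nat \<Rightarrow> nat) \<Rightarrow> bool" where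
  "feasible_labelling n t ub cap L \<longleftrightarrow> (\<forall>x\<in>{1..n}. L x \<in> {1..t}) \<and>
     (\<forall>y\<in>{1..n}. \<forall>k\<in>{1..t}. int (label_count L k y) \<le> ub y k) \<and>
     (\<forall>k\<in>{1..t}. label_count L k n = cap k)"

definition counted_slot :: "(nat \<Rightarrow> nat) \<Rightarrow> (nat \<Rightarrow> nat) \<Rightarrow> nat \<Rightarrow> bool" where
  "counted_slot tau L z \<longleftrightarrow> label_count L (L z) z \<le> tau (L z)"

definition movable_label :: "nat \<Rightarrow> (nat \<Rightarrow> nat \<Rightarrow> int) \<Rightarrow> (nat \<Rightarrow> nat) \<Rightarrow> (nat \<Rightarrow> nat) \<Rightarrow> nat \<Rightarrow> nat \<Rightarrow> bool" where
  "movable_label n ub tau L z k \<longleftrightarrow> label_count L k (z - 1) < tau k \<and>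
     (\<forall>y\<in>{z..n}. int (label_count L k (z - 1)) + 1 \<le> ub y k)"

definition capped_le :: "nat \<Rightarrow> (nat \<Rightarrow> nat) \<Rightarrow> (nat \<Rightarrow> nat) \<Rightarrow> (nat \<Rightarrow> nat) \<Rightarrow> bool" where
  "capped_le t tau L L' \<longleftrightarrow> (\<forall>k\<in>{1..t}. \<forall>y. min (label_count L k y) (tau k) \<le> min (label_count L' k y) (tau k))"

lemma capped_le_refl: "capped_le t tau L L"
  by (simp add: capped_le_def)

lemma capped_le_trans: "capped_le t tau L1 L2 \<Longrightarrow> capped_le t tau L2 L3 \<Longrightarrow> capped_le t tau L1 L3"
  unfolding capped_le_def by (meson order_trans)

lemma capped_count_mono: "capped_le t tau L L' \<Longrightarrow> capped_count t tau L y \<le> capped_count t tau L' y"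
  unfolding capped_le_def capped_count_def by (intro sum_mono) auto

lemma capped_count_le_sum: "capped_count t tau L y \<le> (\<Sum>k=1..t. tau k)"
  unfolding capped_count_def by (intro sum_mono) auto

lemma capped_count_Suc:
  assumes "L (Suc y) \<in> {1..t}"
  shows "capped_count t tau L (Suc y) = capped_count t tau L y + (if counted_slot tau L (Suc y) then 1 else 0)"
proof -
  let ?l = "L (Suc y)"
  have split: "capped_count t tau L y' = min (label_count L ?l y') (tau ?l) + (\<Sum>k\<in>{1..t}-{?l}. min (label_count L k y') (tau k))"
    for y' unfolding capped_count_def using assms by (simp add: sum.remove)
  have "(\<Sum>k\<in>{1..t}-{?l}. min (label_count L k (Suc y)) (tau k)) = (\<Sum>k\<in>{1..t}-{?l}. min (label_count L k y) (tau k))"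
    by (rule sum.cong) (auto simp: label_count_Suc)
  moreover have "min (label_count L ?l (Suc y)) (tau ?l) = min (label_count L ?l y) (tau ?l) + (if counted_slot tau L (Suc y) then 1 else 0)"
    unfolding counted_slot_def by (simp add: label_count_Suc)
  ultimately show ?thesis using split[of y] split[of "Suc y"] by simp
qed

lemma capped_count_le_if_no_movable_label:
  assumes L: "feasible_labelling n t ub cap L" and R: "feasible_labelling n t ub cap R" and "i \<le> n"
    and no_move: "\<forall>z\<in>{1..i}. \<not> counted_slot tau L z \<longrightarrow> (\<forall>k\<in>{1..t}. \<not> movable_label n ub tau L z k)"
  shows "capped_count t tau R i \<le> capped_count t tau L i"
  using assms(3) no_move
proof (induction i)
  case 0
  then show ?case by (simp add: capped_count_def)
next
  case (Suc i)
  have labels: "L (Suc i) \<in> {1..t}" "R (Suc i) \<in> {1..t}"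
    using L R Suc.prems(1) unfolding feasible_labelling_def by auto
  have R_step: "capped_count t tau R (Suc i) \<le> capped_count t tau R i + 1"
    using capped_count_Suc[of R i t tau] labels(2) by simp
  show ?case
  proof (cases "counted_slot tau L (Suc i)")
    case True
    then show ?thesis using Suc R_step capped_count_Suc[of L i t tau] labels(1) by simp
  next
    case False
    \<comment> \<open>Each group below its quota at i is blocked by an upper bound at some later position,
      which then also bounds the count of R at Suc i.\<close>
    have stuck: "\<forall>k\<in>{1..t}. \<not> movable_label n ub tau L (Suc i) k" using Suc.prems False by auto
    have "min (label_count R k (Suc i)) (tau k) \<le> min (label_count L k i) (tau k)" if k: "k \<in> {1..t}" for k
    proof (cases "label_count L k i < tau k")
      case True
      with stuck k obtain y where y: "y \<in> {Suc i..n}" "ub y k < int (label_count L k i) + 1"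
        unfolding movable_label_def by fastforce
      have "int (label_count R k y) \<le> ub y k" using R y(1) k unfolding feasible_labelling_def by auto
      moreover have "label_count R k (Suc i) \<le> label_count R k y" using y(1) by (intro label_count_mono) auto
      ultimately show ?thesis using y(2) by simp
    qed simp
    then have "capped_count t tau R (Suc i) \<le> capped_count t tau L i"
      unfolding capped_count_def by (intro sum_mono) auto
    then show ?thesis using capped_count_Suc[of L i t tau] labels(1) False by simp
  qed
qed

lemma exists_next_label:
  assumes L: "feasible_labelling n t ub cap L" and k: "k \<in> {1..t}"
    and "z \<le> n" and "label_count L k z < cap k"
  obtains p where "z < p" "p \<le> n" "L p = k" "\<forall>x\<in>{z<..<p}. L x \<noteq> k"
proof -
  have total: "label_count L k n = cap k" using L k unfolding feasible_labelling_def by auto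
  have "\<exists>y. z < y \<and> L y = k"
  proof (rule ccontr)
    assume "\<not> ?thesis"
    then have "label_count L k n = label_count L k z" using \<open>z \<le> n\<close> by (intro label_count_const) auto
    then show False using total assms(4) by simp
  qed
  define p where "p = (LEAST y. z < y \<and> L y = k)"
  have p: "z < p" "L p = k" using LeastI_ex[OF \<open>\<exists>y. z < y \<and> L y = k\<close>] unfolding p_def by auto
  have before_p: "\<forall>x\<in>{z<..<p}. L x \<noteq> k" using not_less_Least unfolding p_def by fastforce
  have "p \<le> n"
  proof (rule ccontr)
    assume "\<not> p \<le> n"
    then have "label_count L k n = label_count L k z" using \<open>z \<le> n\<close> before_p by (intro label_count_const) auto
    then show False using total assms(4) by simp
  qed
  then show ?thesis using that p before_p by blast
qed

lemma feasible_labelling_swap: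
  assumes L: "feasible_labelling n t ub cap L" and z: "z \<in> {1..n}" and p: "z < p" "p \<le> n" "L p = k"
    and k: "k \<in> {1..t}" and no_k: "\<forall>x\<in>{z..<p}. L x \<noteq> k"
    and room: "\<forall>y\<in>{z..n}. int (label_count L k (z - 1)) + 1 \<le> ub y k"
  shows "feasible_labelling n t ub cap (L(z := k, p := L z))"
  unfolding feasible_labelling_def
proof (intro conjI ballI)
  let ?L' = "L(z := k, p := L z)"
  have swap: "label_count ?L' k' y + (if z \<le> y \<and> y < p \<and> k' = L z then 1 else 0)
      = label_count L k' y + (if z \<le> y \<and> y < p \<and> k' = k then 1 else 0)" for k' y
    using label_count_swap[of z p L k "L z"] z p by auto
  fix y k' assume y: "y \<in> {1..n}" and k': "k' \<in> {1..t}"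
  show "int (label_count ?L' k' y) \<le> ub y k'"
  proof (cases "z \<le> y \<and> y < p \<and> k' = k")
    case True
    have "label_count L k y = label_count L k (z - 1)"
      using True no_k by (intro label_count_const) auto
    moreover have "L z \<noteq> k" using no_k p(1) by auto
    ultimately have "label_count ?L' k' y = label_count L k (z - 1) + 1" using swap[of k' y] True by auto
    then show ?thesis using room y True by (simp add: add.commute)
  next
    case False
    then have "label_count ?L' k' y \<le> label_count L k' y" using swap[of k' y] by (auto split: if_splits)
    then show ?thesis using L y k' unfolding feasible_labelling_def by fastforce
  qed
next
  fix x assume "x \<in> {1..n}"
  then show "(L(z := k, p := L z)) x \<in> {1..t}" using L k z unfolding feasible_labelling_def by auto
next
  fix k' assume "k' \<in> {1..t}"
  have "label_count (L(z := k, p := L z)) k' n = label_count L k' n"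
    using label_count_swap[of z p L k "L z" k' n] z p by auto
  then show "label_count (L(z := k, p := L z)) k' n = cap k'"
    using L \<open>k' \<in> {1..t}\<close> unfolding feasible_labelling_def by auto
qed

lemma capped_le_swap:
  assumes "1 \<le> z" "z < p" "L p = k" "L z \<noteq> k" and over: "tau (L z) < label_count L (L z) z"
  shows "capped_le t tau L (L(z := k, p := L z))"
  unfolding capped_le_def
proof (intro ballI allI)
  fix k' y
  have swap: "label_count (L(z := k, p := L z)) k' y + (if z \<le> y \<and> y < p \<and> k' = L z then 1 else 0)
      = label_count L k' y + (if z \<le> y \<and> y < p \<and> k' = k then 1 else 0)"
    using label_count_swap[of z p L k "L z"] assms by auto
  show "min (label_count L k' y) (tau k') \<le> min (label_count (L(z := k, p := L z)) k' y) (tau k')"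
  proof (cases "z \<le> y \<and> y < p \<and> k' = L z")
    case True
    have "label_count L k' z \<le> label_count L k' y" using True by (intro label_count_mono) simp
    then show ?thesis using swap True over assms(4) by auto
  next
    case False
    then show ?thesis using swap by (auto split: if_splits)
  qed
qed

lemma exists_capped_improvement:
  assumes L: "feasible_labelling n t ub cap L" and tau_le: "\<forall>k\<in>{1..t}. tau k \<le> cap k"
    and z: "z \<in> {1..n}" and uncounted: "\<not> counted_slot tau L z"
    and k: "k \<in> {1..t}" and movable: "movable_label n ub tau L z k"
  shows "\<exists>L'. feasible_labelling n t ub cap L' \<and> capped_le t tau L L'
    \<and> capped_count t tau L z < capped_count t tau L' z"
proof -
  have z_Suc: "z = Suc (z - 1)" using z by auto
  have below_tau: "label_count L k (z - 1) < tau k" using movable unfolding movable_label_def by auto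
  have "L z \<noteq> k"
  proof
    assume "L z = k"
    then have "label_count L (L z) z = label_count L k (z - 1) + 1"
      using label_count_Suc[of L k "z - 1"] z_Suc by simp
    then show False using uncounted below_tau \<open>L z = k\<close> unfolding counted_slot_def by simp
  qed
  then have count_z: "label_count L k z = label_count L k (z - 1)"
    using label_count_Suc[of L k "z - 1"] z_Suc by simp
  have "z \<le> n" using z by simp
  moreover have "label_count L k z < cap k" using count_z below_tau tau_le k by fastforce
  ultimately obtain p where p: "z < p" "p \<le> n" "L p = k" "\<forall>x\<in>{z<..<p}. L x \<noteq> k"
    using exists_next_label[OF L k] by blast
  have no_k: "\<forall>x\<in>{z..<p}. L x \<noteq> k"
  proof
    fix x assume "x \<in> {z..<p}"
    then show "L x \<noteq> k" using p(4) \<open>L z \<noteq> k\<close> by (cases "x = z") auto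
  qed
  \<comment> \<open>Swap the next k-label into slot z: group L z is over its quota from z on, so the
    label it loses in [z, p) does not lower its capped count.\<close>
  define L' where "L' = L(z := k, p := L z)"
  have "feasible_labelling n t ub cap L'"
    unfolding L'_def using feasible_labelling_swap[OF L z p(1-3) k no_k] movable
    unfolding movable_label_def by blast
  moreover have "capped_le t tau L L'"
    unfolding L'_def using capped_le_swap[OF _ p(1) p(3) \<open>L z \<noteq> k\<close>] z uncounted
    unfolding counted_slot_def by auto
  moreover have "capped_count t tau L z < capped_count t tau L' z"
    unfolding capped_count_def
  proof (rule sum_strict_mono_ex1)
    show "\<forall>x\<in>{1..t}. min (label_count L x z) (tau x) \<le> min (label_count L' x z) (tau x)"
      using \<open>capped_le t tau L L'\<close> unfolding capped_le_def by auto
    have "label_count L' k z = label_count L k (z - 1) + 1"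
      using label_count_swap[of z p L k "L z" k z] z p \<open>L z \<noteq> k\<close> count_z by (simp add: L'_def)
    then show "\<exists>a\<in>{1..t}. min (label_count L a z) (tau a) < min (label_count L' a z) (tau a)"
      using count_z below_tau k by (intro bexI[of _ k]) auto
  qed simp
  ultimately show ?thesis by blast
qed

lemma exists_capped_le_labelling_ge_count:
  assumes R: "feasible_labelling n t ub cap R" and tau_le: "\<forall>k\<in>{1..t}. tau k \<le> cap k" and "i \<le> n"
    and L: "feasible_labelling n t ub cap L"
  shows "\<exists>L'. feasible_labelling n t ub cap L' \<and> capped_le t tau L L' \<and> capped_count t tau R i \<le> capped_count t tau L' i"
  using L
proof (induction "n * (\<Sum>k=1..t. tau k) - (\<Sum>y=1..n. capped_count t tau L y)" arbitrary: L rule: less_induct)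
  case less
  show ?case
  proof (cases "\<forall>z\<in>{1..i}. \<not> counted_slot tau L z \<longrightarrow> (\<forall>k\<in>{1..t}. \<not> movable_label n ub tau L z k)")
    case True
    then show ?thesis
      using capped_count_le_if_no_movable_label[OF less.prems R \<open>i \<le> n\<close>] capped_le_refl less.prems by blast
  next
    case False
    then obtain z k where z: "z \<in> {1..i}" "\<not> counted_slot tau L z" and k: "k \<in> {1..t}" "movable_label n ub tau L z k"
      by blast
    have "z \<in> {1..n}" using z \<open>i \<le> n\<close> by auto
    then obtain L1 where L1: "feasible_labelling n t ub cap L1" "capped_le t tau L L1"
        "capped_count t tau L z < capped_count t tau L1 z"
      using exists_capped_improvement[OF less.prems tau_le _ z(2) k] by blast
    have "(\<Sum>y=1..n. capped_count t tau L y) < (\<Sum>y=1..n. capped_count t tau L1 y)"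
      using L1 \<open>z \<in> {1..n}\<close> by (intro sum_strict_mono_ex1) (auto intro: capped_count_mono)
    moreover have "(\<Sum>y=1..n. capped_count t tau L1 y) \<le> n * (\<Sum>k=1..t. tau k)"
      using sum_mono[of "{1..n}" "capped_count t tau L1" "\<lambda>_. \<Sum>k=1..t. tau k"] capped_count_le_sum by simp
    ultimately obtain L' where "feasible_labelling n t ub cap L'" "capped_le t tau L1 L'"
        "capped_count t tau R i \<le> capped_count t tau L' i"
      using less.hyps[OF _ L1(1)] by (meson diff_less_mono2 order_less_le_trans)
    then show ?thesis using L1(2) capped_le_trans by blast
  qed
qed

section \<open>Assignments meeting deadlines\<close>

definition hall_deadlines :: "('a \<Rightarrow> nat) \<Rightarrow> ('a \<Rightarrow> nat) \<Rightarrow> 'a set \<Rightarrow> (nat \<Rightarrow> nat) \<Rightarrow> nat set \<Rightarrow> bool" where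
  "hall_deadlines grp w A L B \<longleftrightarrow>
     (\<forall>k y. card {a\<in>A. grp a = k \<and> w a \<le> y} \<le> card {b\<in>B. L b = k \<and> b \<le> y})"

lemma hall_deadlines_remove_latest:
  assumes fin: "finite S" "finite B" and "a0 \<notin> S" and latest: "\<forall>a\<in>S. w a \<le> w a0"
    and hall: "hall_deadlines grp w (insert a0 S) L B"
    and b0: "b0 \<in> B" "L b0 = grp a0" "b0 \<le> w a0"
    and b0_max: "\<forall>b\<in>B. L b = grp a0 \<and> b \<le> w a0 \<longrightarrow> b \<le> b0"
  shows "hall_deadlines grp w S L (B - {b0})"
  unfolding hall_deadlines_def
proof (intro allI)
  fix k y
  let ?A = "{a\<in>S. grp a = k \<and> w a \<le> y}" and ?B = "{b\<in>B. L b = k \<and> b \<le> y}"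
  have old: "card {a\<in>insert a0 S. grp a = k' \<and> w a \<le> y'} \<le> card {b\<in>B. L b = k' \<and> b \<le> y'}" for k' y'
    using hall unfolding hall_deadlines_def by blast
  have fin': "finite ?A" "finite ?B" using fin by auto
  have card_insert_A: "card (insert a0 ?A) = card ?A + 1" using fin'(1) \<open>a0 \<notin> S\<close> by simp
  show "card ?A \<le> card {b\<in>B - {b0}. L b = k \<and> b \<le> y}"
  proof (cases "b0 \<in> ?B")
    case False
    then have "{b\<in>B - {b0}. L b = k \<and> b \<le> y} = ?B" by auto
    moreover have "card ?A \<le> card {a\<in>insert a0 S. grp a = k \<and> w a \<le> y}" using fin by (intro card_mono) auto
    ultimately show ?thesis using old[of k y] by simp
  next
    case True
    then have k: "k = grp a0" "b0 \<le> y" using b0 by auto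
    have "{b\<in>B - {b0}. L b = k \<and> b \<le> y} = ?B - {b0}" by auto
    then have card_B: "card {b\<in>B - {b0}. L b = k \<and> b \<le> y} = card ?B - 1"
      using True fin'(2) by simp
    show ?thesis
    proof (cases "w a0 \<le> y")
      case True
      then have "{a\<in>insert a0 S. grp a = k \<and> w a \<le> y} = insert a0 ?A" using k by auto
      then show ?thesis using old[of k y] card_B card_insert_A by simp
    next
      case False
      have "?B = {b\<in>B. L b = grp a0 \<and> b \<le> w a0}" using False k b0_max by fastforce
      moreover have "insert a0 ?A \<subseteq> {a\<in>insert a0 S. grp a = grp a0 \<and> w a \<le> w a0}" using latest k by auto
      then have "card (insert a0 ?A) \<le> card {a\<in>insert a0 S. grp a = grp a0 \<and> w a \<le> w a0}"
        using fin by (intro card_mono) auto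
      ultimately show ?thesis using old[of "grp a0" "w a0"] card_B card_insert_A by simp
    qed
  qed
qed

lemma exists_injection_meeting_deadlines:
  fixes w grp :: "'a \<Rightarrow> nat" and L :: "nat \<Rightarrow> nat"
  assumes "finite A" "finite B" and "hall_deadlines grp w A L B"
  obtains \<phi> where "inj_on \<phi> A" "\<phi> ` A \<subseteq> B" "\<forall>a\<in>A. L (\<phi> a) = grp a \<and> \<phi> a \<le> w a"
proof -
  have "\<exists>\<phi>. inj_on \<phi> A \<and> \<phi> ` A \<subseteq> B \<and> (\<forall>a\<in>A. L (\<phi> a) = grp a \<and> \<phi> a \<le> w a)"
    using assms
  proof (induction A arbitrary: B rule: finite_ranking_induct[where f = w])
    case empty
    then show ?case by auto
  next
    case (insert a0 S)
    show ?case
    proof (cases "a0 \<in> S")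
      case True
      then show ?thesis using insert.IH insert.prems by (simp add: insert_absorb)
    next
      case False
      \<comment> \<open>The element with the latest deadline takes the latest admissible slot of its group.\<close>
      define Bc where "Bc = {b\<in>B. L b = grp a0 \<and> b \<le> w a0}"
      have "card {a\<in>insert a0 S. grp a = grp a0 \<and> w a \<le> w a0} \<le> card Bc"
        using insert.prems(2) unfolding hall_deadlines_def Bc_def by blast
      moreover have "0 < card {a\<in>insert a0 S. grp a = grp a0 \<and> w a \<le> w a0}"
        using insert.hyps(1) by (subst card_gt_0_iff) auto
      ultimately have "card Bc > 0" by linarith
      then have Bc: "finite Bc" "Bc \<noteq> {}" using card_gt_0_iff by blast+
      define b0 where "b0 = Max Bc"
      have b0: "b0 \<in> B" "L b0 = grp a0" "b0 \<le> w a0" using Max_in[OF Bc] unfolding b0_def Bc_def by auto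
      have b0_max: "\<forall>b\<in>B. L b = grp a0 \<and> b \<le> w a0 \<longrightarrow> b \<le> b0"
        using Max_ge[OF Bc(1)] unfolding b0_def Bc_def by blast
      have latest: "\<forall>a\<in>S. w a \<le> w a0" using insert.hyps(2) by blast
      have "finite (B - {b0})" using insert.prems(1) by simp
      moreover have "hall_deadlines grp w S L (B - {b0})"
        by (rule hall_deadlines_remove_latest[OF insert.hyps(1) insert.prems(1) False latest insert.prems(2) b0 b0_max])
      ultimately have "\<exists>\<phi>. inj_on \<phi> S \<and> \<phi> ` S \<subseteq> B - {b0} \<and> (\<forall>a\<in>S. L (\<phi> a) = grp a \<and> \<phi> a \<le> w a)"
        by (rule insert.IH)
      then obtain \<phi> where \<phi>: "inj_on \<phi> S" "\<phi> ` S \<subseteq> B - {b0}" "\<forall>a\<in>S. L (\<phi> a) = grp a \<and> \<phi> a \<le> w a"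
        by blast
      have "inj_on (\<phi>(a0 := b0)) S" using \<phi>(1) False by (simp add: inj_on_def)
      then have "inj_on (\<phi>(a0 := b0)) (insert a0 S)" using \<phi>(2) False by auto
      moreover have "(\<phi>(a0 := b0)) ` insert a0 S \<subseteq> B" using \<phi>(2) False b0(1) by auto
      moreover have "\<forall>a\<in>insert a0 S. L ((\<phi>(a0 := b0)) a) = grp a \<and> (\<phi>(a0 := b0)) a \<le> w a"
        using \<phi>(3) b0 False by auto
      ultimately show ?thesis by blast
    qed
  qed
  then show ?thesis using that by blast
qed

section \<open>Maxmin-fair distributions\<close>

lemma dist_val_eq_sum:
  assumes "finite S" "set_pmf D \<subseteq> S"
  shows "dist_val A D u = (\<Sum>s\<in>S. A s u * pmf D s)"
  unfolding dist_val_def using assms by (intro integral_measure_pmf_real) auto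

lemma maxmin_fair_support_pareto_optimal:
  fixes A :: "'s \<Rightarrow> 'u \<Rightarrow> real"
  assumes SS: "finite SS" and fair: "maxmin_fair SS U A F"
    and s: "s \<in> set_pmf F" and s': "s' \<in> SS"
    and T: "worst_off_set U (dist_val A F) T" and weak: "\<forall>u\<in>T. A s u \<le> A s' u"
  shows "\<not> (\<exists>u\<in>T. A s u < A s' u)"
proof
  assume "\<exists>u\<in>T. A s u < A s' u"
  then obtain us where us: "us \<in> T" "A s u < A s' u" if "u = us" for u by blast
  have F: "set_pmf F \<subseteq> SS" using fair unfolding maxmin_fair_def by simp
  define \<psi> where "\<psi> q = (if q = s then s' else q)" for q
  define D where "D = map_pmf \<psi> F"
  have D: "set_pmf D \<subseteq> SS" using F s' unfolding D_def \<psi>_def by auto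
  have shift: "dist_val A D u = dist_val A F u + pmf F s * (A s' u - A s u)" for u
  proof -
    have "dist_val A D u = (\<Sum>q\<in>SS. A (\<psi> q) u * pmf F q)"
      unfolding dist_val_def D_def using SS F by (simp add: integral_map_pmf integral_measure_pmf_real subset_eq)
    also have "\<dots> = (\<Sum>q\<in>SS. A q u * pmf F q) + (\<Sum>q\<in>SS. (A (\<psi> q) u - A q u) * pmf F q)"
      by (simp add: sum_subtractf left_diff_distrib)
    also have "(\<Sum>q\<in>SS. (A (\<psi> q) u - A q u) * pmf F q) = (A s' u - A s u) * pmf F s"
      using SS s F by (subst sum.remove[of _ s]) (auto simp: \<psi>_def intro!: sum.neutral)
    finally show ?thesis by (simp add: dist_val_eq_sum[OF SS F])
  qed
  have "pmf F s > 0" using s by (simp add: pmf_positive)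
  then have "dist_val A F us < dist_val A D us" using shift[of us] us by simp
  moreover have "us \<in> U" using T us(1) unfolding worst_off_set_def by auto
  ultimately obtain v where v: "v \<in> U" "dist_val A D v < dist_val A F v" "dist_val A F v \<le> dist_val A F us"
    using fair D unfolding maxmin_fair_def by blast
  have "v \<in> T" using T us(1) v(1,3) unfolding worst_off_set_def by blast
  moreover have "A s' v < A s v" using v(2) shift[of v] \<open>pmf F s > 0\<close> by (simp add: mult_less_0_iff)
  ultimately show False using weak by fastforce
qed

lemma sum_dist_val_le_if_support_maximizes:
  fixes A :: "'s \<Rightarrow> 'u \<Rightarrow> real"
  assumes SS: "finite SS" "set_pmf F \<subseteq> SS" "set_pmf D \<subseteq> SS" and "finite T"
    and max: "\<And>s q. s \<in> set_pmf F \<Longrightarrow> q \<in> SS \<Longrightarrow> (\<Sum>u\<in>T. A q u) \<le> (\<Sum>u\<in>T. A s u)"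
  shows "(\<Sum>u\<in>T. dist_val A D u) \<le> (\<Sum>u\<in>T. dist_val A F u)"
proof -
  define \<Psi> where "\<Psi> q = (\<Sum>u\<in>T. A q u)" for q
  have expectation: "(\<Sum>u\<in>T. dist_val A M u) = measure_pmf.expectation M \<Psi>" if "set_pmf M \<subseteq> SS" for M
  proof -
    have "integrable M (\<lambda>q. A q u)" for u
      using that SS(1) by (auto intro: integrable_measure_pmf_finite finite_subset)
    then show ?thesis
      using Bochner_Integration.integral_sum[of T "measure_pmf M" "\<lambda>u q. A q u"] unfolding dist_val_def \<Psi>_def by simp
  qed
  obtain s0 where s0: "s0 \<in> set_pmf F" using set_pmf_not_empty by fast
  have "measure_pmf.expectation D \<Psi> \<le> \<Psi> s0"
    using SS max[OF s0] by (intro measure_pmf.integral_le_const)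
      (auto intro: integrable_measure_pmf_finite finite_subset simp: AE_measure_pmf_iff \<Psi>_def)
  also have "\<Psi> s0 \<le> measure_pmf.expectation F \<Psi>"
    using SS s0 max by (intro measure_pmf.integral_ge_const)
      (auto intro: integrable_measure_pmf_finite finite_subset simp: AE_measure_pmf_iff \<Psi>_def)
  finally show ?thesis using expectation SS by simp
qed

section \<open>Rankings under upper-bound group constraints\<close>

definition group_of :: "nat \<Rightarrow> (nat \<Rightarrow> 'a set) \<Rightarrow> 'a \<Rightarrow> nat" where
  "group_of t C u = (SOME k. k \<in> {1..t} \<and> u \<in> C k)"

(* inv s x is arbitrary outside the positions 1..CARD('a); only those positions are ever inspected. *)
definition group_sequence :: "nat \<Rightarrow> (nat \<Rightarrow> 'a set) \<Rightarrow> ('a \<Rightarrow> nat) \<Rightarrow> nat \<Rightarrow> nat" where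
  "group_sequence t C s x = group_of t C (inv s x)"

lemma ranking_range: "s \<in> rankings \<Longrightarrow> s u \<in> {1..CARD('a)}" for s :: "'a::finite \<Rightarrow> nat"
  unfolding rankings_def bij_betw_def by auto

lemma group_sequence_at_rank: "s \<in> rankings \<Longrightarrow> group_sequence t C s (s u) = group_of t C u"
  unfolding group_sequence_def rankings_def bij_betw_def by simp

lemma finite_feasible_rankings: "finite (feasible_rankings t C ub :: ('a::finite \<Rightarrow> nat) set)"
proof -
  have "rankings \<subseteq> (PiE UNIV (\<lambda>_. {1..CARD('a)}) :: ('a \<Rightarrow> nat) set)"
    using ranking_range[where 'a = 'a] by (auto simp: PiE_def extensional_def)
  then have "finite (rankings :: ('a \<Rightarrow> nat) set)" by (rule finite_subset) (intro finite_PiE, auto)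
  then show ?thesis unfolding feasible_rankings_def by simp
qed

locale group_partition =
  fixes t :: nat and C :: "nat \<Rightarrow> 'a::finite set"
  assumes groups_cover: "(\<Union>k\<in>{1..t}. C k) = UNIV"
    and groups_disjoint: "\<forall>k\<in>{1..t}. \<forall>l\<in>{1..t}. k \<noteq> l \<longrightarrow> C k \<inter> C l = {}"
begin

lemma group_of:
  shows "group_of t C u \<in> {1..t}" "u \<in> C (group_of t C u)"
proof -
  have "\<exists>k. k \<in> {1..t} \<and> u \<in> C k" using groups_cover by blast
  then show "group_of t C u \<in> {1..t}" "u \<in> C (group_of t C u)"
    unfolding group_of_def by (metis (mono_tags, lifting) someI_ex)+
qed

lemma group_of_eq:
  assumes "k \<in> {1..t}" "u \<in> C k"
  shows "group_of t C u = k"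
  using group_of[of u] groups_disjoint assms by blast

lemma label_count_eq_card_group:
  fixes \<phi> :: "'a::finite \<Rightarrow> nat"
  assumes bij: "bij_betw \<phi> UNIV {1..CARD('a)}" and labels: "\<forall>u. L (\<phi> u) = group_of t C u"
    and k: "k \<in> {1..t}" and "y \<le> CARD('a)"
  shows "label_count L k y = card {u \<in> C k. \<phi> u \<le> y}"
proof -
  have inj: "inj_on \<phi> {u \<in> C k. \<phi> u \<le> y}" using bij by (auto simp: bij_betw_def intro: inj_on_subset)
  have "\<phi> ` {u \<in> C k. \<phi> u \<le> y} = {x\<in>{1..y}. L x = k}"
  proof (intro equalityI subsetI)
    fix x assume "x \<in> \<phi> ` {u \<in> C k. \<phi> u \<le> y}"
    then obtain u where u: "u \<in> C k" "\<phi> u \<le> y" "x = \<phi> u" by auto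
    have "\<phi> u \<in> {1..CARD('a)}" using bij_betw_apply[OF bij] by blast
    moreover have "L x = k" using u labels group_of_eq[OF k u(1)] by simp
    ultimately show "x \<in> {x\<in>{1..y}. L x = k}" using u by simp
  next
    fix x assume x: "x \<in> {x\<in>{1..y}. L x = k}"
    then have "x \<in> \<phi> ` UNIV" using bij \<open>y \<le> CARD('a)\<close> by (simp add: bij_betw_def)
    then obtain u where "x = \<phi> u" by blast
    then show "x \<in> \<phi> ` {u \<in> C k. \<phi> u \<le> y}" using x labels group_of(2)[of u] by auto
  qed
  then show ?thesis unfolding label_count_def using card_image[OF inj] by simp
qed

lemma feasible_labelling_group_sequence:
  fixes s :: "'a::finite \<Rightarrow> nat"
  assumes s: "s \<in> feasible_rankings t C ub"
  shows "feasible_labelling CARD('a) t ub (\<lambda>k. card (C k)) (group_sequence t C s)"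
proof -
  have "s \<in> rankings" using s unfolding feasible_rankings_def by auto
  then have bij: "bij_betw s UNIV {1..CARD('a)}" and labels: "\<forall>u. group_sequence t C s (s u) = group_of t C u"
    using group_sequence_at_rank unfolding rankings_def by auto
  note count = label_count_eq_card_group[OF bij labels]
  show ?thesis unfolding feasible_labelling_def
  proof (intro conjI ballI)
    fix x assume "x \<in> {1..CARD('a)}"
    then obtain u where "x = s u" using bij unfolding bij_betw_def by (metis imageE)
    then show "group_sequence t C s x \<in> {1..t}" using labels group_of(1) by auto
  next
    fix y k assume "y \<in> {1..CARD('a)}" "k \<in> {1..t}"
    then show "int (label_count (group_sequence t C s) k y) \<le> ub y k"
      using count s unfolding feasible_rankings_def by auto
  next
    fix k assume "k \<in> {1..t}"
    moreover have "{u \<in> C k. s u \<le> CARD('a)} = C k" using ranking_range[OF \<open>s \<in> rankings\<close>] by auto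
    ultimately show "label_count (group_sequence t C s) k CARD('a) = card (C k)" using count by auto
  qed
qed

lemma feasible_rankingI:
  fixes \<phi> :: "'a::finite \<Rightarrow> nat"
  assumes bij: "bij_betw \<phi> UNIV {1..CARD('a)}" and labels: "\<forall>u. L (\<phi> u) = group_of t C u"
    and L: "feasible_labelling CARD('a) t ub cap L"
  shows "\<phi> \<in> feasible_rankings t C ub"
  unfolding feasible_rankings_def rankings_def
proof (intro CollectI conjI bij ballI)
  fix i k assume "i \<in> {1..CARD('a)}" "k \<in> {1..t}"
  then show "int (card {u \<in> C k. \<phi> u \<le> i}) \<le> ub i k"
    using label_count_eq_card_group[OF bij labels] L unfolding feasible_labelling_def by auto
qed

lemma card_eq_sum_groups:
  assumes "finite T"
  shows "card {u\<in>T. P u} = (\<Sum>k=1..t. card {u\<in>T \<inter> C k. P u})"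
proof -
  have "{u\<in>T. P u} = (\<Union>k\<in>{1..t}. {u\<in>T \<inter> C k. P u})" using groups_cover by auto
  moreover have "card (\<Union>k\<in>{1..t}. {u\<in>T \<inter> C k. P u}) = (\<Sum>k=1..t. card {u\<in>T \<inter> C k. P u})"
    using groups_disjoint \<open>finite T\<close> by (intro card_UN_disjoint) auto
  ultimately show ?thesis by simp
qed

lemma card_prefix_le_capped_count:
  fixes s :: "'a::finite \<Rightarrow> nat"
  assumes s: "s \<in> rankings" and "y \<le> CARD('a)"
  shows "card {u\<in>T. s u \<le> y} \<le> capped_count t (\<lambda>k. card (T \<inter> C k)) (group_sequence t C s) y"
proof -
  have bij: "bij_betw s UNIV {1..CARD('a)}" and labels: "\<forall>u. group_sequence t C s (s u) = group_of t C u"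
    using s group_sequence_at_rank unfolding rankings_def by auto
  have "card {u\<in>T. s u \<le> y} = (\<Sum>k=1..t. card {u\<in>T \<inter> C k. s u \<le> y})"
    using card_eq_sum_groups[OF finite] .
  also have "\<dots> \<le> (\<Sum>k=1..t. min (label_count (group_sequence t C s) k y) (card (T \<inter> C k)))"
  proof (rule sum_mono)
    fix k assume k: "k \<in> {1..t}"
    have "card {u\<in>T \<inter> C k. s u \<le> y} \<le> card {u \<in> C k. s u \<le> y}" "card {u\<in>T \<inter> C k. s u \<le> y} \<le> card (T \<inter> C k)"
      by (auto intro: card_mono)
    then show "card {u\<in>T \<inter> C k. s u \<le> y} \<le> min (label_count (group_sequence t C s) k y) (card (T \<inter> C k))"
      using label_count_eq_card_group[OF bij labels k \<open>y \<le> CARD('a)\<close>] by simp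
  qed
  finally show ?thesis unfolding capped_count_def .
qed

lemma exists_feasible_ranking_meeting_deadlines:
  fixes w :: "'a::finite \<Rightarrow> nat"
  assumes L: "feasible_labelling CARD('a) t ub cap L"
    and hall: "hall_deadlines (group_of t C) w UNIV L {1..CARD('a)}"
  obtains \<phi> where "\<phi> \<in> feasible_rankings t C ub" "\<forall>u. \<phi> u \<le> w u"
proof -
  obtain \<phi> where \<phi>: "inj \<phi>" "range \<phi> \<subseteq> {1..CARD('a)}" "\<forall>u\<in>UNIV. L (\<phi> u) = group_of t C u \<and> \<phi> u \<le> w u"
    by (rule exists_injection_meeting_deadlines[OF finite_class.finite_UNIV finite_atLeastAtMost hall])
  have "card (range \<phi>) = card {1..CARD('a)}" using \<phi>(1) by (simp add: card_image)
  then have "range \<phi> = {1..CARD('a)}" using \<phi>(2) by (intro card_subset_eq) simp_all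
  then have bij: "bij_betw \<phi> UNIV {1..CARD('a)}" using \<phi>(1) by (simp add: bij_betw_def)
  have labels: "\<forall>u. L (\<phi> u) = group_of t C u" using \<phi>(3) by blast
  have "\<phi> \<in> feasible_rankings t C ub" using feasible_rankingI[OF bij labels L] .
  then show ?thesis using that \<phi>(3) by blast
qed

lemma hall_deadlines_move_up:
  fixes s :: "'a::finite \<Rightarrow> nat" and T :: "'a set" and i :: nat and us :: 'a
  defines "n \<equiv> CARD('a)"
  defines "w \<equiv> \<lambda>u. if u = us then i else if u \<in> T then s u else n"
  assumes s: "s \<in> rankings" and L': "feasible_labelling n t ub (\<lambda>k. card (C k)) L'"
    and dom: "capped_le t (\<lambda>k. card (T \<inter> C k)) (group_sequence t C s) L'"
    and k: "k \<in> {1..t}" and room: "card {u\<in>T \<inter> C k. s u \<le> i} < label_count L' k i"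
    and us: "us \<in> T \<inter> C k" "i < s us" and us_min: "\<forall>u\<in>T \<inter> C k. i < s u \<longrightarrow> s us \<le> s u"
  shows "hall_deadlines (group_of t C) w UNIV L' {1..n}"
  unfolding hall_deadlines_def
proof (intro allI)
  fix k' y
  let ?A = "{a\<in>UNIV. group_of t C a = k' \<and> w a \<le> y}"
  show "card ?A \<le> card {b\<in>{1..n}. L' b = k' \<and> b \<le> y}"
  proof (cases "k' \<in> {1..t}")
    case False
    then have "?A = {}" using group_of(1) by auto
    then show ?thesis by (metis card.empty le0)
  next
    case k': True
    have count_s: "label_count (group_sequence t C s) k' y = card {u \<in> C k'. s u \<le> y}" if "y \<le> n"
      using label_count_eq_card_group[OF _ _ k'] s that group_sequence_at_rank
      unfolding rankings_def n_def by blast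
    show ?thesis
    proof (cases "n \<le> y")
      case True
      have "card ?A \<le> card (C k')" using group_of(2) by (intro card_mono) auto
      also have "\<dots> = label_count L' k' n" using L' k' unfolding feasible_labelling_def by auto
      also have "\<dots> = card {b\<in>{1..n}. L' b = k' \<and> b \<le> y}" using True unfolding label_count_def
        by (intro arg_cong[where f = card]) auto
      finally show ?thesis .
    next
      case False
      have "{b\<in>{1..n}. L' b = k' \<and> b \<le> y} = {x\<in>{1..y}. L' x = k'}" using False by auto
      then have rhs: "card {b\<in>{1..n}. L' b = k' \<and> b \<le> y} = label_count L' k' y" by (simp add: label_count_def)
      have in_T: "a \<in> T \<inter> C k'" if "a \<in> ?A" for a
        using that False us(1) group_of(2)[of a] unfolding w_def by (auto split: if_splits)
      show ?thesis
      proof (cases "k' = k \<and> i \<le> y \<and> y < s us")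
        case True
        have "?A \<subseteq> insert us {u\<in>T \<inter> C k. s u \<le> i}"
        proof
          fix a assume a: "a \<in> ?A"
          show "a \<in> insert us {u\<in>T \<inter> C k. s u \<le> i}"
          proof (cases "a = us")
            case False
            then have "s a \<le> y" using a in_T[OF a] unfolding w_def by auto
            have a_k: "a \<in> T \<inter> C k" using in_T[OF a] True by simp
            have "s a \<le> i"
            proof (rule ccontr)
              assume "\<not> s a \<le> i"
              then have "s us \<le> s a" using us_min a_k by auto
              then show False using \<open>s a \<le> y\<close> True by simp
            qed
            then show ?thesis using a_k by auto
          qed simp
        qed
        then have "card ?A \<le> card (insert us {u\<in>T \<inter> C k. s u \<le> i})" by (intro card_mono) auto
        also have "\<dots> \<le> card {u\<in>T \<inter> C k. s u \<le> i} + 1" by (simp add: card_insert_if)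
        also have "\<dots> \<le> label_count L' k i" using room by simp
        also have "\<dots> \<le> label_count L' k y" using True by (intro label_count_mono) simp
        finally show ?thesis using rhs True by simp
      next
        case not_moved: False
        have "?A \<subseteq> {u\<in>T \<inter> C k'. s u \<le> y}"
        proof
          fix a assume a: "a \<in> ?A"
          have "s a \<le> y"
          proof (cases "a = us")
            case True
            then show ?thesis using a not_moved us unfolding w_def by (auto simp: group_of_eq[OF k])
          qed (use a in_T[OF a] in \<open>auto simp: w_def\<close>)
          then show "a \<in> {u\<in>T \<inter> C k'. s u \<le> y}" using in_T[OF a] by simp
        qed
        then have "card ?A \<le> card {u \<in> C k'. s u \<le> y}" "card ?A \<le> card (T \<inter> C k')"
          by (auto intro: card_mono order_trans)
        then have "card ?A \<le> min (card {u \<in> C k'. s u \<le> y}) (card (T \<inter> C k'))" by simp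
        also have "\<dots> = min (label_count (group_sequence t C s) k' y) (card (T \<inter> C k'))"
          using count_s False by simp
        also have "\<dots> \<le> min (label_count L' k' y) (card (T \<inter> C k'))"
          using dom k' unfolding capped_le_def by blast
        finally show ?thesis using rhs by simp
      qed
    qed
  qed
qed

lemma exists_ranking_moving_up:
  fixes s :: "'a::finite \<Rightarrow> nat" and T :: "'a set"
  assumes s: "s \<in> feasible_rankings t C ub"
    and L': "feasible_labelling CARD('a) t ub (\<lambda>k. card (C k)) L'"
    and dom: "capped_le t (\<lambda>k. card (T \<inter> C k)) (group_sequence t C s) L'"
    and k: "k \<in> {1..t}" and room: "card {u\<in>T \<inter> C k. s u \<le> i} < min (label_count L' k i) (card (T \<inter> C k))"
  obtains s' where "s' \<in> feasible_rankings t C ub" "\<forall>u\<in>T. s' u \<le> s u" "\<exists>u\<in>T. s' u \<le> i \<and> i < s u"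
proof -
  have "s \<in> rankings" using s unfolding feasible_rankings_def by simp
  have "\<exists>u. u \<in> T \<inter> C k \<and> i < s u"
  proof (rule ccontr)
    assume "\<not> ?thesis"
    then have "{u\<in>T \<inter> C k. s u \<le> i} = T \<inter> C k" by auto
    then show False using room by simp
  qed
  then obtain u0 where "u0 \<in> T \<inter> C k \<and> i < s u0" ..
  from ex_has_least_nat[of "\<lambda>u. u \<in> T \<inter> C k \<and> i < s u", OF this]
  obtain us where us: "us \<in> T \<inter> C k" "i < s us" and us_min: "\<forall>u\<in>T \<inter> C k. i < s u \<longrightarrow> s us \<le> s u"
    by blast
  \<comment> \<open>us, the earliest member of T in group k after i, must move up to position i; the other
    members of T must not move down.\<close>
  define w where "w u = (if u = us then i else if u \<in> T then s u else CARD('a))" for u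
  have hall: "hall_deadlines (group_of t C) w UNIV L' {1..CARD('a)}"
    unfolding w_def
    by (rule hall_deadlines_move_up[OF \<open>s \<in> rankings\<close> L' dom k _ us us_min]) (use room in simp)
  obtain \<phi> where \<phi>: "\<phi> \<in> feasible_rankings t C ub" "\<forall>u. \<phi> u \<le> w u"
    by (rule exists_feasible_ranking_meeting_deadlines[OF L' hall])
  have "\<forall>u\<in>T. \<phi> u \<le> s u"
  proof
    fix u assume "u \<in> T"
    then show "\<phi> u \<le> s u" using \<phi>(2)[rule_format, of u] us(2) unfolding w_def by (cases "u = us") auto
  qed
  moreover have "\<phi> us \<le> i" using \<phi>(2)[rule_format, of us] unfolding w_def by simp
  ultimately show ?thesis using that \<phi>(1) us by blast
qed

lemma exists_pareto_improvement:
  fixes s r :: "'a::finite \<Rightarrow> nat" and f :: "nat \<Rightarrow> real" and T :: "'a set"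
  assumes f: "antimono_on {1..CARD('a)} f"
    and s: "s \<in> feasible_rankings t C ub" and r: "r \<in> feasible_rankings t C ub"
    and less: "(\<Sum>u\<in>T. f (s u)) < (\<Sum>u\<in>T. f (r u))"
  obtains s' where "s' \<in> feasible_rankings t C ub" "\<forall>u\<in>T. f (s u) \<le> f (s' u)" "\<exists>u\<in>T. f (s u) < f (s' u)"
proof -
  define tau where "tau k = card (T \<inter> C k)" for k
  have tau_le: "\<forall>k\<in>{1..t}. tau k \<le> card (C k)" unfolding tau_def by (auto intro: card_mono)
  have rankings: "s \<in> rankings" "r \<in> rankings" using s r unfolding feasible_rankings_def by auto
  obtain i where i: "i \<in> {1..<CARD('a)}" "f (Suc i) < f i" "card {u\<in>T. s u \<le> i} < card {u\<in>T. r u \<le> i}"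
    using exists_prefix_count_gap[OF finite _ _ f less] ranking_range rankings by blast
  have "card {u\<in>T. r u \<le> i} \<le> capped_count t tau (group_sequence t C r) i"
    using card_prefix_le_capped_count[OF rankings(2)] i(1) unfolding tau_def by simp
  moreover have "i \<le> CARD('a)" using i(1) by simp
  with tau_le obtain L' where L': "feasible_labelling CARD('a) t ub (\<lambda>k. card (C k)) L'"
      "capped_le t tau (group_sequence t C s) L'"
      "capped_count t tau (group_sequence t C r) i \<le> capped_count t tau L' i"
    using exists_capped_le_labelling_ge_count[OF feasible_labelling_group_sequence[OF r] _ _
        feasible_labelling_group_sequence[OF s]] by blast
  ultimately have "(\<Sum>k=1..t. card {u\<in>T \<inter> C k. s u \<le> i}) < (\<Sum>k=1..t. min (label_count L' k i) (tau k))"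
    using i(3) card_eq_sum_groups[OF finite, of T "\<lambda>u. s u \<le> i"] unfolding capped_count_def by linarith
  then obtain k where "k \<in> {1..t}" "card {u\<in>T \<inter> C k. s u \<le> i} < min (label_count L' k i) (tau k)"
    by (meson not_less sum_mono)
  then obtain s' where s': "s' \<in> feasible_rankings t C ub" "\<forall>u\<in>T. s' u \<le> s u" "\<exists>u\<in>T. s' u \<le> i \<and> i < s u"
    using exists_ranking_moving_up[OF s L'(1)] L'(2) unfolding tau_def by blast
  have ranges: "s' u \<in> {1..CARD('a)}" "s u \<in> {1..CARD('a)}" for u
    using ranking_range s' rankings unfolding feasible_rankings_def by auto
  have "\<forall>u\<in>T. f (s u) \<le> f (s' u)" using s'(2) ranges monotone_onD[OF f] by blast
  moreover obtain u where "u \<in> T" "s' u \<le> i" "i < s u" using s'(3) by blast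
  then have "f (s u) \<le> f (Suc i)" "f i \<le> f (s' u)" using ranges monotone_onD[OF f] i(1) by (auto simp: Suc_le_eq)
  then have "f (s u) < f (s' u)" using i(2) by linarith
  then have "\<exists>u\<in>T. f (s u) < f (s' u)" using \<open>u \<in> T\<close> by blast
  ultimately show ?thesis using that s'(1) by blast
qed

lemma feasible_ranking_support_maximizes_worst_off_sum:
  fixes f :: "nat \<Rightarrow> real" and g :: "'a::finite \<Rightarrow> real" and T :: "'a set"
  defines "V \<equiv> \<lambda>r u. f (r u) - g u"
  assumes f: "antimono_on {1..CARD('a)} f"
    and fair: "maxmin_fair (feasible_rankings t C ub) UNIV V F"
    and T: "worst_off_set UNIV (dist_val V F) T"
    and s: "s \<in> set_pmf F" and q: "q \<in> feasible_rankings t C ub"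
  shows "(\<Sum>u\<in>T. V q u) \<le> (\<Sum>u\<in>T. V s u)"
proof -
  have "s \<in> feasible_rankings t C ub" using fair s unfolding maxmin_fair_def by auto
  have "(\<Sum>u\<in>T. f (q u)) \<le> (\<Sum>u\<in>T. f (s u))"
  proof (rule ccontr)
    assume "\<not> ?thesis"
    then obtain s' where "s' \<in> feasible_rankings t C ub" "\<forall>u\<in>T. V s u \<le> V s' u" "\<exists>u\<in>T. V s u < V s' u"
      using exists_pareto_improvement[OF f \<open>s \<in> feasible_rankings t C ub\<close> q] unfolding V_def
      by (metis diff_mono diff_strict_right_mono not_le order_refl)
    then show False using maxmin_fair_support_pareto_optimal[OF finite_feasible_rankings fair s _ T] by blast
  qed
  then show ?thesis unfolding V_def by (simp add: sum_subtractf)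
qed

end

theorem theorem2:
  fixes t :: nat
    and C :: "nat \<Rightarrow> 'a::finite set"
    and R :: "'a \<Rightarrow> real"
    and f :: "nat \<Rightarrow> real"
    and g :: "'a \<Rightarrow> real"
    and ub :: "nat \<Rightarrow> nat \<Rightarrow> int"
    and F :: "('a \<Rightarrow> nat) pmf"
  assumes groups_nonempty: "\<forall>k\<in>{1..t}. C k \<noteq> {}"
    and groups_disjoint: "\<forall>k\<in>{1..t}. \<forall>l\<in>{1..t}. k \<noteq> l \<longrightarrow> C k \<inter> C l = {}"
    and groups_cover: "(\<Union>k\<in>{1..t}. C k) = UNIV"
    and R_inj: "inj R"
    and f_mono: "\<forall>i j. 1 \<le> i \<and> i \<le> j \<and> j \<le> CARD('a) \<longrightarrow> f j \<le> f i"
    and g_mono: "\<forall>u v. R u \<ge> R v \<longrightarrow> g u \<ge> g v"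
    and S_nonempty: "feasible_rankings t C ub \<noteq> {}"
    and F_fair: "maxmin_fair (feasible_rankings t C ub) UNIV (\<lambda>r u. f (r u) - g u) F"
  shows "\<forall>D. set_pmf D \<subseteq> feasible_rankings t C ub \<longrightarrow>
           (\<forall>m\<in>{1..CARD('a)}.
              lorenz_sum UNIV (dist_val (\<lambda>r u. f (r u) - g u) D) m
              \<le> lorenz_sum UNIV (dist_val (\<lambda>r u. f (r u) - g u) F) m)"
proof (intro allI impI ballI)
  fix D :: "('a \<Rightarrow> nat) pmf" and m :: nat
  assume D: "set_pmf D \<subseteq> feasible_rankings t C ub" and m: "m \<in> {1..CARD('a)}"
  let ?V = "\<lambda>r u. f (r u) - g u"
  interpret group_partition t C using groups_cover groups_disjoint by unfold_locales
  have f: "antimono_on {1..CARD('a)} f" using f_mono by (auto intro: monotone_onI)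
  have F: "set_pmf F \<subseteq> feasible_rankings t C ub" using F_fair unfolding maxmin_fair_def by simp
  show "lorenz_sum UNIV (dist_val ?V D) m \<le> lorenz_sum UNIV (dist_val ?V F) m"
  proof (rule lorenz_sum_le_if_worst_off_sums_le)
    fix T assume T: "worst_off_set UNIV (dist_val ?V F) T"
    show "sum (dist_val ?V D) T \<le> sum (dist_val ?V F) T"
      by (rule sum_dist_val_le_if_support_maximizes[OF finite_feasible_rankings F D finite])
        (rule feasible_ranking_support_maximizes_worst_off_sum[OF f F_fair T])
  qed (use m in auto)
qed

end
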